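(* Let $f_1,\ldots,f_k\in\mathbb{R}[X_1,\ldots,X_n]$ with $\deg f_i<d$ for all $i$, and suppose that the origin is not a solution of the system $f_1\ge 0,\ldots,f_k\ge 0$ and that its solution set in $\mathbb{R}^n$ is bounded. Let $D$ be the minimal even integer not less than $kd+1$ and $$g(\varepsilon)=\prod_{1\le i\le k}(f_i+\varepsilon)-\varepsilon^{k+1}\sum_{1\le j\le n}X_j^{D}.$$ Then for all sufficiently small positive values of $\varepsilon$: if the system $f_1\ge 0,\ldots,f_k\ge 0$ has a real solution, then the system of equations $\frac{\partial g(\varepsilon)}{\partial X_1}=\cdots=\frac{\partial g(\varepsilon)}{\partial X_n}=0$ has only finitely many roots in $\mathbb{C}^n$. *)

theory Defs
  imports Complex_Main "HOL-Library.Poly_Mapping"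
begin

text \<open>A monomial is a finitely supported exponent vector nat \<Rightarrow>0 nat; variable j
  (0-based) stands for X_(j+1).\<close>

type_synonym 'a mpoly = "(nat \<Rightarrow>\<^sub>0 nat) \<Rightarrow>\<^sub>0 'a"

definition mconst :: "'a::zero \<Rightarrow> 'a mpoly" where
  "mconst c = Poly_Mapping.single 0 c"

definition mvar :: "nat \<Rightarrow> 'a::{zero,one} mpoly" where
  "mvar j = Poly_Mapping.single (Poly_Mapping.single j 1) 1"

definition mdeg :: "(nat \<Rightarrow>\<^sub>0 nat) \<Rightarrow> nat" where
  "mdeg m = (\<Sum>j\<in>Poly_Mapping.keys m. Poly_Mapping.lookup m j)"

text \<open>deg p < d (with the convention deg 0 = -infinity): every monomial occurring in p
  has total degree < d.\<close>
definition deg_less :: "'a::zero mpoly \<Rightarrow> nat \<Rightarrow> bool" where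
  "deg_less p d \<longleftrightarrow> (\<forall>m\<in>Poly_Mapping.keys p. mdeg m < d)"

definition vars_in :: "nat \<Rightarrow> 'a::zero mpoly \<Rightarrow> bool" where
  "vars_in n p \<longleftrightarrow> (\<forall>m\<in>Poly_Mapping.keys p. Poly_Mapping.keys m \<subseteq> {..<n})"

definition meval :: "real mpoly \<Rightarrow> (nat \<Rightarrow> 'b::{real_algebra_1,comm_ring_1}) \<Rightarrow> 'b" where
  "meval p x = (\<Sum>m\<in>Poly_Mapping.keys p. of_real (Poly_Mapping.lookup p m) * (\<Prod>j\<in>Poly_Mapping.keys m. x j ^ Poly_Mapping.lookup m j))"

definition mpderiv :: "nat \<Rightarrow> 'a::comm_ring_1 mpoly \<Rightarrow> 'a mpoly" where
  "mpderiv j p = (\<Sum>m\<in>Poly_Mapping.keys p.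
      Poly_Mapping.single (m - Poly_Mapping.single j 1) (of_nat (Poly_Mapping.lookup m j) * Poly_Mapping.lookup p m))"

definition min_even_ge :: "nat \<Rightarrow> nat" where
  "min_even_ge N = (LEAST D. even D \<and> N \<le> D)"

end

theory Submission
  imports Defs "HOL-Library.FuncSet"
begin

(* Since deg (\<Prod>i<k. f i + \<epsilon>) \<le> k (d - 1) < D, for every \<epsilon> \<noteq> 0 the partial derivative of g(\<epsilon>) by X_j
   is -D \<epsilon>^(k+1) X_j^(D-1) plus terms of total degree < D - 1. So at a common complex zero z each
   z_j^(D-1) is a linear combination of monomials of lower degree in z, and by induction on the degree
   every monomial in z is a linear combination, with coefficients independent of z, of the N monomials
   whose exponents are all < D - 1. The N + 1 powers 1, z_j, ..., z_j^N then satisfy a nontrivial linear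
   relation independent of z: z_j is a root of a fixed nonzero univariate polynomial, so each coordinate
   takes only finitely many values. *)

definition mon :: "nat \<Rightarrow> (nat \<Rightarrow> 'a::comm_semiring_1) \<Rightarrow> (nat \<Rightarrow> nat) \<Rightarrow> 'a" where
  "mon n z \<alpha> = (\<Prod>l<n. z l ^ \<alpha> l)"

definition tdeg :: "nat \<Rightarrow> (nat \<Rightarrow> nat) \<Rightarrow> nat" where
  "tdeg n \<alpha> = (\<Sum>l<n. \<alpha> l)"

lemma mon_add: "mon n z (\<lambda>l. \<alpha> l + \<beta> l) = mon n z \<alpha> * mon n z \<beta>"
  unfolding mon_def by (simp add: power_add prod.distrib)

lemma tdeg_add: "tdeg n (\<lambda>l. \<alpha> l + \<beta> l) = tdeg n \<alpha> + tdeg n \<beta>"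
  unfolding tdeg_def by (simp add: sum.distrib)

lemma mon_pure_power: "j < n \<Longrightarrow> mon n z (\<lambda>l. if l = j then m else 0) = z j ^ m"
  unfolding mon_def by (simp add: if_distrib[of "power _"] cong: if_cong)

lemma tdeg_pure_power: "j < n \<Longrightarrow> tdeg n (\<lambda>l. if l = j then m else 0) = m"
  unfolding tdeg_def by simp

lemma mon_restrict: "mon n z (restrict \<alpha> {..<n}) = mon n z \<alpha>"
  unfolding mon_def by (rule prod.cong) auto

lemma mon_reduces_to_box:
  fixes V :: "(nat \<Rightarrow> 'a::comm_ring_1) set"
  assumes pure_powers: "\<And>j. j < n \<Longrightarrow> \<exists>T::'t set. \<exists>e b. finite T \<and> (\<forall>t\<in>T. tdeg n (e t) < m) \<and>
      (\<forall>z\<in>V. z j ^ m = (\<Sum>t\<in>T. b t * mon n z (e t)))"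
  shows "\<exists>c. \<forall>z\<in>V. mon n z \<alpha> = (\<Sum>\<beta>\<in>{..<n} \<rightarrow>\<^sub>E {..<m}. c \<beta> * mon n z \<beta>)"
proof (induction "tdeg n \<alpha>" arbitrary: \<alpha> rule: less_induct)
  case less
  let ?B = "{..<n} \<rightarrow>\<^sub>E {..<m}"
  show ?case
  proof (cases "\<forall>j<n. \<alpha> j < m")
    case True
    then have "restrict \<alpha> {..<n} \<in> ?B" by auto
    then have "mon n z \<alpha> = (\<Sum>\<beta>\<in>?B. (if \<beta> = restrict \<alpha> {..<n} then 1 else 0) * mon n z \<beta>)"
      for z :: "nat \<Rightarrow> 'a"
      by (simp add: sum.delta' finite_PiE mon_restrict if_distrib[of "\<lambda>x. x * _"] cong: if_cong)
    then show ?thesis by (intro exI[of _ "\<lambda>\<beta>. if \<beta> = restrict \<alpha> {..<n} then 1 else 0"]) blast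
  next
    case False
    then obtain j where j: "j < n" "m \<le> \<alpha> j" by (auto simp: not_less)
    obtain T :: "'t set" and e b where T: "finite T" and e: "\<forall>t\<in>T. tdeg n (e t) < m"
      and b: "\<forall>z\<in>V. z j ^ m = (\<Sum>t\<in>T. b t * mon n z (e t))"
      using pure_powers[OF j(1)] by blast
    define \<gamma> where "\<gamma> = \<alpha>(j := \<alpha> j - m)"
    have \<alpha>_split: "\<alpha> = (\<lambda>l. \<gamma> l + (if l = j then m else 0))"
      using j unfolding \<gamma>_def by auto
    have "tdeg n \<alpha> = tdeg n \<gamma> + m"
      using j(1) by (subst \<alpha>_split) (simp add: tdeg_add tdeg_pure_power)
    then have "tdeg n (\<lambda>l. \<gamma> l + e t l) < tdeg n \<alpha>" if "t \<in> T" for t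
      using e that by (simp add: tdeg_add)
    then have "\<forall>t\<in>T. \<exists>c. \<forall>z\<in>V. mon n z (\<lambda>l. \<gamma> l + e t l) = (\<Sum>\<beta>\<in>?B. c \<beta> * mon n z \<beta>)"
      using less by blast
    then obtain C where C: "\<forall>t\<in>T. \<forall>z\<in>V. mon n z (\<lambda>l. \<gamma> l + e t l) = (\<Sum>\<beta>\<in>?B. C t \<beta> * mon n z \<beta>)"
      by metis
    have "mon n z \<alpha> = (\<Sum>\<beta>\<in>?B. (\<Sum>t\<in>T. b t * C t \<beta>) * mon n z \<beta>)" if z: "z \<in> V" for z
    proof -
      have "mon n z \<alpha> = mon n z \<gamma> * z j ^ m"
        by (subst \<alpha>_split, subst mon_add) (simp add: mon_pure_power j)
      also have "\<dots> = (\<Sum>t\<in>T. b t * mon n z (\<lambda>l. \<gamma> l + e t l))"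
        using b z by (simp add: sum_distrib_left mon_add mult.commute mult.left_commute)
      also have "\<dots> = (\<Sum>t\<in>T. b t * (\<Sum>\<beta>\<in>?B. C t \<beta> * mon n z \<beta>))"
        using C z by simp
      also have "\<dots> = (\<Sum>\<beta>\<in>?B. (\<Sum>t\<in>T. b t * C t \<beta>) * mon n z \<beta>)"
        by (simp add: sum_distrib_left sum_distrib_right mult.assoc sum.swap[of _ T])
      finally show ?thesis .
    qed
    then show ?thesis by (intro exI[of _ "\<lambda>\<beta>. \<Sum>t\<in>T. b t * C t \<beta>"]) blast
  qed
qed

lemma exists_nontrivial_linear_relation:
  fixes v :: "'i \<Rightarrow> 'r \<Rightarrow> 'a::field"
  assumes "finite R" "finite I" "card R < card I"
  shows "\<exists>a. (\<exists>i\<in>I. a i \<noteq> 0) \<and> (\<forall>r\<in>R. (\<Sum>i\<in>I. a i * v i r) = 0)"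
  using assms
proof (induction R arbitrary: I v rule: finite_induct)
  case empty
  then obtain i where "i \<in> I" by fastforce
  then show ?case by (intro exI[of _ "\<lambda>_. 1"]) auto
next
  case (insert r0 R)
  show ?case
  proof (cases "\<exists>i0\<in>I. v i0 r0 \<noteq> 0")
    case False
    have "card R < card I" using insert by simp
    then obtain a where "\<exists>i\<in>I. a i \<noteq> 0" "\<forall>r\<in>R. (\<Sum>i\<in>I. a i * v i r) = 0"
      using insert.IH[OF insert.prems(1)] by blast
    then show ?thesis using False by auto
  next
    case True
    then obtain i0 where i0: "i0 \<in> I" "v i0 r0 \<noteq> 0" by blast
    define w where "w = (\<lambda>i r. v i r - (v i r0 / v i0 r0) * v i0 r)"
    have "card R < card (I - {i0})" using insert i0 by auto
    then obtain a where a: "\<exists>i\<in>I - {i0}. a i \<noteq> 0" "\<forall>r\<in>R. (\<Sum>i\<in>I - {i0}. a i * w i r) = 0"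
      using insert.IH[of "I - {i0}" w] insert.prems by blast
    define a' where "a' = a(i0 := - (\<Sum>i\<in>I - {i0}. a i * (v i r0 / v i0 r0)))"
    have a'_w: "(\<Sum>i\<in>I. a' i * v i r) = (\<Sum>i\<in>I - {i0}. a i * w i r)" for r
    proof -
      have "(\<Sum>i\<in>I. a' i * v i r) = a' i0 * v i0 r + (\<Sum>i\<in>I - {i0}. a' i * v i r)"
        using i0 insert.prems by (simp add: sum.remove)
      also have "(\<Sum>i\<in>I - {i0}. a' i * v i r) = (\<Sum>i\<in>I - {i0}. a i * v i r)"
        unfolding a'_def by (rule sum.cong) auto
      also have "a' i0 * v i0 r = - (\<Sum>i\<in>I - {i0}. a i * (v i r0 / v i0 r0) * v i0 r)"
        unfolding a'_def by (simp add: sum_distrib_right)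
      finally show ?thesis
        by (simp add: w_def right_diff_distrib sum_subtractf mult.assoc)
    qed
    have "(\<Sum>i\<in>I - {i0}. a i * w i r0) = 0" using i0 by (simp add: w_def)
    then have "\<forall>r\<in>insert r0 R. (\<Sum>i\<in>I. a' i * v i r) = 0" using a'_w a by auto
    moreover have "\<exists>i\<in>I. a' i \<noteq> 0" using a unfolding a'_def by auto
    ultimately show ?thesis by blast
  qed
qed

lemma finite_coordinate_values_if_pure_powers_reduce:
  fixes V :: "(nat \<Rightarrow> 'a::real_normed_field) set"
  assumes pure_powers: "\<And>j. j < n \<Longrightarrow> \<exists>T::'t set. \<exists>e b. finite T \<and> (\<forall>t\<in>T. tdeg n (e t) < m) \<and>
      (\<forall>z\<in>V. z j ^ m = (\<Sum>t\<in>T. b t * mon n z (e t)))"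
    and j: "j < n"
  shows "finite ((\<lambda>z. z j) ` V)"
proof -
  let ?B = "{..<n} \<rightarrow>\<^sub>E {..<m}"
  define N where "N = card ?B"
  have "\<exists>c. \<forall>z\<in>V. z j ^ i = (\<Sum>\<beta>\<in>?B. c \<beta> * mon n z \<beta>)" for i
    using mon_reduces_to_box[OF pure_powers, of "\<lambda>l. if l = j then i else 0"]
    by (simp add: mon_pure_power j)
  then obtain C where C: "\<And>i. \<forall>z\<in>V. z j ^ i = (\<Sum>\<beta>\<in>?B. C i \<beta> * mon n z \<beta>)"
    by metis
  obtain a where a: "\<exists>i\<in>{..N}. a i \<noteq> 0" "\<forall>\<beta>\<in>?B. (\<Sum>i\<le>N. a i * C i \<beta>) = 0"
    using exists_nontrivial_linear_relation[of ?B "{..N}" C] by (auto simp: N_def finite_PiE)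
  have "(\<Sum>i\<le>N. a i * z j ^ i) = 0" if "z \<in> V" for z
  proof -
    have "(\<Sum>i\<le>N. a i * z j ^ i) = (\<Sum>i\<le>N. a i * (\<Sum>\<beta>\<in>?B. C i \<beta> * mon n z \<beta>))"
      using C that by simp
    also have "\<dots> = (\<Sum>\<beta>\<in>?B. (\<Sum>i\<le>N. a i * C i \<beta>) * mon n z \<beta>)"
      by (simp add: sum_distrib_left sum_distrib_right mult.assoc sum.swap[of _ "{..N}"])
    finally show ?thesis using a(2) by simp
  qed
  then have "(\<lambda>z. z j) ` V \<subseteq> {x. (\<Sum>i\<le>N. a i * x ^ i) = 0}" by blast
  moreover have "finite {x. (\<Sum>i\<le>N. a i * x ^ i) = 0}"
    using a(1) by (subst polyfun_finite_roots) auto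
  ultimately show ?thesis by (rule finite_subset)
qed

lemma finite_if_finite_coordinate_values:
  fixes V :: "(nat \<Rightarrow> 'a::zero) set"
  assumes "\<And>j. j < n \<Longrightarrow> finite ((\<lambda>z. z j) ` V)" and "\<forall>z\<in>V. \<forall>j\<ge>n. z j = 0"
  shows "finite V"
proof (rule finite_imageD)
  show "inj_on (\<lambda>z. restrict z {..<n}) V"
  proof (rule inj_onI, rule ext)
    fix z w x assume z: "z \<in> V" and w: "w \<in> V" and eq: "restrict z {..<n} = restrict w {..<n}"
    show "z x = w x"
    proof (cases "x < n")
      case True
      then show ?thesis using fun_cong[OF eq, of x] by simp
    next
      case False
      then show ?thesis using assms(2) z w by (metis not_less)
    qed
  qed
  have "(\<lambda>z. restrict z {..<n}) ` V \<subseteq> PiE {..<n} (\<lambda>j. (\<lambda>z. z j) ` V)"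
    by (rule image_subsetI) (simp add: restrict_PiE_iff)
  then show "finite ((\<lambda>z. restrict z {..<n}) ` V)"
    by (rule finite_subset) (intro finite_PiE; simp add: assms(1))
qed

definition deg_le :: "'a::zero mpoly \<Rightarrow> nat \<Rightarrow> bool" where
  "deg_le p a \<longleftrightarrow> (\<forall>\<mu>\<in>Poly_Mapping.keys p. mdeg \<mu> \<le> a)"

lemma keys_add_monomial:
  "Poly_Mapping.keys ((\<mu>::nat \<Rightarrow>\<^sub>0 nat) + \<nu>) = Poly_Mapping.keys \<mu> \<union> Poly_Mapping.keys \<nu>"
  by (auto simp: in_keys_iff lookup_add)

lemma mdeg_eq_sum_superset:
  assumes "finite S" "Poly_Mapping.keys \<mu> \<subseteq> S"
  shows "mdeg \<mu> = (\<Sum>j\<in>S. Poly_Mapping.lookup \<mu> j)"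
  unfolding mdeg_def using assms by (intro sum.mono_neutral_left) (auto simp: in_keys_iff)

lemma mdeg_add: "mdeg (\<mu> + \<nu>) = mdeg \<mu> + mdeg \<nu>"
proof -
  let ?S = "Poly_Mapping.keys \<mu> \<union> Poly_Mapping.keys \<nu>"
  have "mdeg (\<mu> + \<nu>) = (\<Sum>j\<in>?S. Poly_Mapping.lookup (\<mu> + \<nu>) j)"
    by (intro mdeg_eq_sum_superset) (auto simp: keys_add_monomial)
  also have "\<dots> = (\<Sum>j\<in>?S. Poly_Mapping.lookup \<mu> j) + (\<Sum>j\<in>?S. Poly_Mapping.lookup \<nu> j)"
    by (simp add: lookup_add sum.distrib)
  also have "\<dots> = mdeg \<mu> + mdeg \<nu>"
    by (subst (1 2) mdeg_eq_sum_superset[of ?S]) auto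
  finally show ?thesis .
qed

lemma mdeg_zero [simp]: "mdeg 0 = 0"
  by (simp add: mdeg_def)

lemma mdeg_single [simp]: "mdeg (Poly_Mapping.single j c) = c"
  by (simp add: mdeg_def)

lemma deg_le_add: "deg_le p a \<Longrightarrow> deg_le q a \<Longrightarrow> deg_le (p + q) a"
  unfolding deg_le_def using keys_add[of p q] by blast

lemma deg_le_mult:
  assumes "deg_le p a" "deg_le q b"
  shows "deg_le (p * q) (a + b)"
  unfolding deg_le_def
proof
  fix \<mu> assume "\<mu> \<in> Poly_Mapping.keys (p * q)"
  then obtain \<kappa> \<rho> where "\<mu> = \<kappa> + \<rho>" "\<kappa> \<in> Poly_Mapping.keys p" "\<rho> \<in> Poly_Mapping.keys q"
    using keys_mult[of p q] by blast
  then show "mdeg \<mu> \<le> a + b"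
    using assms by (auto simp: deg_le_def mdeg_add intro: add_mono)
qed

lemma deg_le_prod:
  fixes F :: "'i \<Rightarrow> 'a::comm_semiring_1 mpoly"
  assumes "finite I" "\<forall>i\<in>I. deg_le (F i) a"
  shows "deg_le (prod F I) (card I * a)"
  using assms
proof (induction I rule: finite_induct)
  case empty
  then show ?case by (simp add: deg_le_def)
next
  case (insert i I)
  then show ?case by (simp add: deg_le_mult)
qed

lemma vars_in_add: "vars_in n p \<Longrightarrow> vars_in n q \<Longrightarrow> vars_in n (p + q)"
  unfolding vars_in_def using keys_add[of p q] by blast

lemma vars_in_diff: "vars_in n p \<Longrightarrow> vars_in n q \<Longrightarrow> vars_in n (p - q)"
  unfolding vars_in_def using keys_diff[of p q] by blast

lemma vars_in_mult:
  assumes "vars_in n p" "vars_in n q"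
  shows "vars_in n (p * q)"
  unfolding vars_in_def
proof
  fix \<mu> assume "\<mu> \<in> Poly_Mapping.keys (p * q)"
  then obtain \<kappa> \<rho> where "\<mu> = \<kappa> + \<rho>" "\<kappa> \<in> Poly_Mapping.keys p" "\<rho> \<in> Poly_Mapping.keys q"
    using keys_mult[of p q] by blast
  then show "Poly_Mapping.keys \<mu> \<subseteq> {..<n}"
    using assms by (auto simp: vars_in_def keys_add_monomial)
qed

lemma vars_in_prod:
  fixes F :: "'i \<Rightarrow> 'a::comm_semiring_1 mpoly"
  assumes "finite I" "\<forall>i\<in>I. vars_in n (F i)"
  shows "vars_in n (prod F I)"
  using assms
proof (induction I rule: finite_induct)
  case empty
  then show ?case by (simp add: vars_in_def)
next
  case (insert i I)
  then show ?case by (simp add: vars_in_mult)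
qed

lemma mvar_power: "mvar l ^ N = Poly_Mapping.single (Poly_Mapping.single l N) (1::'a::comm_semiring_1)"
proof (induction N)
  case (Suc N)
  then show ?case
    by (simp add: mvar_def mult_single single_add[symmetric] add.commute)
qed simp

lemma mconst_mult_sum_mvar_power:
  "mconst c * (\<Sum>l<n. mvar l ^ D) = (\<Sum>l<n. Poly_Mapping.single (Poly_Mapping.single l D) (c::'a::comm_semiring_1))"
  by (simp add: mconst_def mvar_power sum_distrib_left mult_single)

lemma keys_mpderiv:
  "Poly_Mapping.keys (mpderiv j p) \<subseteq>
     {\<nu> - Poly_Mapping.single j 1 | \<nu>. \<nu> \<in> Poly_Mapping.keys p \<and> Poly_Mapping.lookup \<nu> j \<noteq> 0}"
proof
  fix \<mu> assume "\<mu> \<in> Poly_Mapping.keys (mpderiv j p)"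
  then obtain \<nu> where \<nu>: "\<nu> \<in> Poly_Mapping.keys p" and \<mu>: "\<mu> \<in> Poly_Mapping.keys
      (Poly_Mapping.single (\<nu> - Poly_Mapping.single j 1) (of_nat (Poly_Mapping.lookup \<nu> j) * Poly_Mapping.lookup p \<nu>))"
    unfolding mpderiv_def by (blast dest: subsetD[OF keys_sum])
  from \<mu> have "of_nat (Poly_Mapping.lookup \<nu> j) * Poly_Mapping.lookup p \<nu> \<noteq> 0" "\<mu> = \<nu> - Poly_Mapping.single j 1"
    by (simp_all split: if_splits)
  then have "Poly_Mapping.lookup \<nu> j \<noteq> 0" "\<mu> = \<nu> - Poly_Mapping.single j 1"
    by (metis mult_zero_left of_nat_0)+
  with \<nu> show "\<mu> \<in> {\<nu> - Poly_Mapping.single j 1 | \<nu>. \<nu> \<in> Poly_Mapping.keys p \<and> Poly_Mapping.lookup \<nu> j \<noteq> 0}"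
    by blast
qed

lemma keys_diff_monomial: "Poly_Mapping.keys ((\<nu>::nat \<Rightarrow>\<^sub>0 nat) - \<mu>) \<subseteq> Poly_Mapping.keys \<nu>"
  by (auto simp: in_keys_iff lookup_minus)

lemma vars_in_mpderiv:
  assumes "vars_in n p"
  shows "vars_in n (mpderiv j p)"
  unfolding vars_in_def
proof
  fix \<mu> assume "\<mu> \<in> Poly_Mapping.keys (mpderiv j p)"
  then obtain \<nu> where "\<mu> = \<nu> - Poly_Mapping.single j 1" "\<nu> \<in> Poly_Mapping.keys p"
    using keys_mpderiv by blast
  then show "Poly_Mapping.keys \<mu> \<subseteq> {..<n}"
    using assms keys_diff_monomial[of \<nu>] unfolding vars_in_def by blast
qed

lemma lookup_mpderiv_single:
  fixes p :: "'a::comm_ring_1 mpoly"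
  shows "Poly_Mapping.lookup (mpderiv j p) (Poly_Mapping.single j N) =
    of_nat (Suc N) * Poly_Mapping.lookup p (Poly_Mapping.single j (Suc N))"
proof -
  let ?s = "Poly_Mapping.single j (Suc N)"
  have preimage: "\<nu> - Poly_Mapping.single j 1 = Poly_Mapping.single j N \<and> Poly_Mapping.lookup \<nu> j \<noteq> 0
      \<longleftrightarrow> \<nu> = ?s" for \<nu> :: "nat \<Rightarrow>\<^sub>0 nat"
  proof
    assume h: "\<nu> - Poly_Mapping.single j 1 = Poly_Mapping.single j N \<and> Poly_Mapping.lookup \<nu> j \<noteq> 0"
    show "\<nu> = ?s"
    proof (rule poly_mapping_eqI)
      fix l
      have "Poly_Mapping.lookup (\<nu> - Poly_Mapping.single j 1) l = Poly_Mapping.lookup (Poly_Mapping.single j N) l"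
        using h by simp
      then show "Poly_Mapping.lookup \<nu> l = Poly_Mapping.lookup ?s l"
        using h by (cases "l = j") (auto simp: lookup_minus lookup_single)
    qed
  next
    assume "\<nu> = ?s"
    then show "\<nu> - Poly_Mapping.single j 1 = Poly_Mapping.single j N \<and> Poly_Mapping.lookup \<nu> j \<noteq> 0"
      by (auto intro!: poly_mapping_eqI simp: lookup_minus lookup_single when_def)
  qed
  have "Poly_Mapping.lookup (mpderiv j p) (Poly_Mapping.single j N) =
      (\<Sum>\<nu>\<in>Poly_Mapping.keys p. if \<nu> = ?s then of_nat (Poly_Mapping.lookup \<nu> j) * Poly_Mapping.lookup p \<nu> else 0)"
    unfolding mpderiv_def lookup_sum
  proof (rule sum.cong)
    fix \<nu> assume "\<nu> \<in> Poly_Mapping.keys p"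
    show "Poly_Mapping.lookup (Poly_Mapping.single (\<nu> - Poly_Mapping.single j 1)
        (of_nat (Poly_Mapping.lookup \<nu> j) * Poly_Mapping.lookup p \<nu>)) (Poly_Mapping.single j N) =
      (if \<nu> = ?s then of_nat (Poly_Mapping.lookup \<nu> j) * Poly_Mapping.lookup p \<nu> else 0)"
      using preimage[of \<nu>] by (auto simp: lookup_single when_def)
  qed simp
  also have "\<dots> = of_nat (Suc N) * Poly_Mapping.lookup p ?s"
    by (simp add: in_keys_iff)
  finally show ?thesis .
qed

lemma monomial_minus_plus_single:
  "Poly_Mapping.lookup \<nu> j \<noteq> 0 \<Longrightarrow> \<nu> - Poly_Mapping.single j 1 + Poly_Mapping.single j 1 = (\<nu> :: nat \<Rightarrow>\<^sub>0 nat)"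
  by (intro poly_mapping_eqI) (auto simp: lookup_add lookup_minus lookup_single when_def)

lemma single_minus_single_one:
  "Poly_Mapping.single j (D::nat) - Poly_Mapping.single j 1 = Poly_Mapping.single j (D - 1)"
  by (rule poly_mapping_eqI) (simp add: lookup_minus lookup_single when_def)

lemma mpderiv_pure_power_leading:
  fixes G :: "'a::{idom,ring_char_0} mpoly"
  assumes lead: "Poly_Mapping.lookup G (Poly_Mapping.single j D) \<noteq> 0" and D: "0 < D"
    and lower: "\<And>\<nu>. \<nu> \<in> Poly_Mapping.keys G \<Longrightarrow> Poly_Mapping.lookup \<nu> j \<noteq> 0 \<Longrightarrow>
      \<nu> \<noteq> Poly_Mapping.single j D \<Longrightarrow> mdeg \<nu> < D"
  shows "Poly_Mapping.lookup (mpderiv j G) (Poly_Mapping.single j (D - 1)) \<noteq> 0"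
    and "\<And>\<mu>. \<mu> \<in> Poly_Mapping.keys (mpderiv j G) \<Longrightarrow> \<mu> \<noteq> Poly_Mapping.single j (D - 1) \<Longrightarrow>
      mdeg \<mu> < D - 1"
proof -
  show "Poly_Mapping.lookup (mpderiv j G) (Poly_Mapping.single j (D - 1)) \<noteq> 0"
    using lookup_mpderiv_single[of j G "D - 1"] lead D by simp
next
  fix \<mu> assume \<mu>: "\<mu> \<in> Poly_Mapping.keys (mpderiv j G)" "\<mu> \<noteq> Poly_Mapping.single j (D - 1)"
  then obtain \<nu> where \<nu>: "\<mu> = \<nu> - Poly_Mapping.single j 1" "\<nu> \<in> Poly_Mapping.keys G"
    "Poly_Mapping.lookup \<nu> j \<noteq> 0"
    using keys_mpderiv by blast
  have "\<nu> \<noteq> Poly_Mapping.single j D"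
    using \<mu>(2) \<nu>(1) single_minus_single_one by metis
  then have "mdeg \<nu> < D" using lower \<nu> by blast
  moreover have "mdeg \<nu> = mdeg \<mu> + 1"
    using monomial_minus_plus_single[OF \<nu>(3)] \<nu>(1) by (metis mdeg_add mdeg_single)
  ultimately show "mdeg \<mu> < D - 1" by linarith
qed

lemma meval_split:
  assumes "\<mu> \<in> Poly_Mapping.keys p"
  shows "meval p z = of_real (Poly_Mapping.lookup p \<mu>) * (\<Prod>l\<in>Poly_Mapping.keys \<mu>. z l ^ Poly_Mapping.lookup \<mu> l)
    + (\<Sum>t\<in>Poly_Mapping.keys p - {\<mu>}. of_real (Poly_Mapping.lookup p t) * (\<Prod>l\<in>Poly_Mapping.keys t. z l ^ Poly_Mapping.lookup t l))"
  unfolding meval_def using assms by (simp add: sum.remove)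

lemma prod_keys_eq_mon:
  assumes "Poly_Mapping.keys t \<subseteq> {..<n}"
  shows "(\<Prod>l\<in>Poly_Mapping.keys t. z l ^ Poly_Mapping.lookup t l) = mon n z (Poly_Mapping.lookup t)"
  unfolding mon_def using assms by (intro prod.mono_neutral_left) (auto simp: in_keys_iff)

lemma tdeg_lookup_eq_mdeg:
  assumes "Poly_Mapping.keys t \<subseteq> {..<n}"
  shows "tdeg n (Poly_Mapping.lookup t) = mdeg t"
  unfolding tdeg_def using mdeg_eq_sum_superset[of "{..<n}" t] assms by simp

lemma finite_common_zeros_if_pure_power_leading:
  fixes p :: "nat \<Rightarrow> real mpoly"
  assumes vars: "\<And>j. j < n \<Longrightarrow> vars_in n (p j)"
    and lead: "\<And>j. j < n \<Longrightarrow> Poly_Mapping.lookup (p j) (Poly_Mapping.single j m) \<noteq> 0"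
    and lower: "\<And>j \<mu>. j < n \<Longrightarrow> \<mu> \<in> Poly_Mapping.keys (p j) \<Longrightarrow> \<mu> \<noteq> Poly_Mapping.single j m \<Longrightarrow>
      mdeg \<mu> < m"
  shows "finite {z :: nat \<Rightarrow> 'a::real_normed_field. (\<forall>j\<ge>n. z j = 0) \<and> (\<forall>j<n. meval (p j) z = 0)}"
    (is "finite ?V")
proof -
  have pure_powers: "\<exists>T::(nat \<Rightarrow>\<^sub>0 nat) set. \<exists>e b. finite T \<and> (\<forall>t\<in>T. tdeg n (e t) < m) \<and>
      (\<forall>z\<in>?V. z j ^ m = (\<Sum>t\<in>T. b t * mon n z (e t)))" if j: "j < n" for j
  proof (intro exI conjI ballI)
    let ?\<mu> = "Poly_Mapping.single j m"
    let ?T = "Poly_Mapping.keys (p j) - {?\<mu>}"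
    let ?a = "of_real (Poly_Mapping.lookup (p j) ?\<mu>) :: 'a"
    have keys_T: "Poly_Mapping.keys t \<subseteq> {..<n}" if "t \<in> ?T" for t
      using vars[OF j] that by (auto simp: vars_in_def)
    show "finite ?T" by simp
    show "tdeg n (Poly_Mapping.lookup t) < m" if "t \<in> ?T" for t
      using lower[OF j] that keys_T[OF that] by (simp add: tdeg_lookup_eq_mdeg)
    fix z assume "z \<in> ?V"
    then have "meval (p j) z = 0" using j by blast
    moreover have "(\<Prod>l\<in>Poly_Mapping.keys ?\<mu>. z l ^ Poly_Mapping.lookup ?\<mu> l) = z j ^ m"
      by simp
    moreover have "(\<Sum>t\<in>?T. of_real (Poly_Mapping.lookup (p j) t) * (\<Prod>l\<in>Poly_Mapping.keys t. z l ^ Poly_Mapping.lookup t l))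
        = (\<Sum>t\<in>?T. of_real (Poly_Mapping.lookup (p j) t) * mon n z (Poly_Mapping.lookup t))"
      using keys_T by (intro sum.cong) (simp_all add: prod_keys_eq_mon)
    ultimately have "?a * z j ^ m = - (\<Sum>t\<in>?T. of_real (Poly_Mapping.lookup (p j) t) * mon n z (Poly_Mapping.lookup t))"
      using meval_split[of ?\<mu> "p j" z] lead[OF j] by (simp add: in_keys_iff eq_neg_iff_add_eq_0)
    then have "z j ^ m = - (\<Sum>t\<in>?T. of_real (Poly_Mapping.lookup (p j) t) * mon n z (Poly_Mapping.lookup t)) / ?a"
      using lead[OF j] by (simp add: field_simps)
    also have "\<dots> = (\<Sum>t\<in>?T. (- of_real (Poly_Mapping.lookup (p j) t) / ?a) * mon n z (Poly_Mapping.lookup t))"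
      by (simp add: sum_divide_distrib flip: sum_negf)
    finally show "z j ^ m = (\<Sum>t\<in>?T. (- of_real (Poly_Mapping.lookup (p j) t) / ?a) * mon n z (Poly_Mapping.lookup t))" .
  qed
  have "finite ((\<lambda>z. z j) ` ?V)" if "j < n" for j
    using finite_coordinate_values_if_pure_powers_reduce[OF pure_powers that] by blast
  then show ?thesis by (rule finite_if_finite_coordinate_values) auto
qed

lemma single_eq_single_iff:
  "(v::'b::zero) \<noteq> 0 \<Longrightarrow> Poly_Mapping.single k v = Poly_Mapping.single k' v \<longleftrightarrow> k = k'"
  by (metis lookup_single_eq lookup_single_not_eq)

lemma lookup_sum_pure_powers:
  fixes n D :: nat
  assumes "0 < D" "j < n"
  shows "Poly_Mapping.lookup (\<Sum>l<n. Poly_Mapping.single (Poly_Mapping.single l D) c) (Poly_Mapping.single j D) = c"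
  using assms by (simp add: lookup_sum lookup_single when_def single_eq_single_iff)

lemma keys_sum_pure_powers:
  fixes n D :: nat
  shows "Poly_Mapping.keys (\<Sum>l<n. Poly_Mapping.single (Poly_Mapping.single l D) c) \<subseteq>
     {Poly_Mapping.single l D | l. l < n}"
  using keys_sum[of _ "{..<n}"] by (fastforce split: if_splits)

lemma pure_power_perturbation:
  fixes P :: "'a::comm_ring_1 mpoly" and c :: 'a
  assumes deg: "deg_less P D" and vars: "vars_in n P" and D: "0 < D"
  defines "G \<equiv> P - mconst c * (\<Sum>l<n. mvar l ^ D)"
  shows "vars_in n G"
    and "\<And>j. j < n \<Longrightarrow> Poly_Mapping.lookup G (Poly_Mapping.single j D) = - c"
    and "\<And>\<nu>. \<nu> \<in> Poly_Mapping.keys G \<Longrightarrow> mdeg \<nu> < D \<or> (\<exists>l. \<nu> = Poly_Mapping.single l D)"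
proof -
  define Q where "Q = (\<Sum>l<n. Poly_Mapping.single (Poly_Mapping.single l D) c)"
  have G: "G = P - Q"
    unfolding G_def Q_def by (simp add: mconst_mult_sum_mvar_power)
  have "vars_in n Q"
    using keys_sum_pure_powers[where n = n and D = D and c = c] D unfolding Q_def vars_in_def by fastforce
  then show "vars_in n G"
    unfolding G using vars by (rule vars_in_diff[rotated])
  show "Poly_Mapping.lookup G (Poly_Mapping.single j D) = - c" if "j < n" for j
  proof -
    have "Poly_Mapping.single j D \<notin> Poly_Mapping.keys P"
      using deg unfolding deg_less_def by fastforce
    then show ?thesis
      using lookup_sum_pure_powers[OF D that] unfolding G Q_def by (simp add: lookup_minus in_keys_iff)
  qed
  show "mdeg \<nu> < D \<or> (\<exists>l. \<nu> = Poly_Mapping.single l D)" if "\<nu> \<in> Poly_Mapping.keys G" for \<nu>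
    using that keys_diff[of P Q] keys_sum_pure_powers[where n = n and D = D and c = c] deg
    unfolding G Q_def deg_less_def by blast
qed

lemma finite_gradient_zeros_perturbed_product:
  fixes f :: "nat \<Rightarrow> real mpoly" and \<epsilon> :: real
  assumes vars: "\<forall>i<k. vars_in n (f i)" and degs: "\<forall>i<k. deg_less (f i) d"
    and \<epsilon>: "\<epsilon> \<noteq> 0" and D: "k * d < D"
  shows "finite {z :: nat \<Rightarrow> 'a::real_normed_field. (\<forall>j\<ge>n. z j = 0) \<and>
    (\<forall>j<n. meval (mpderiv j ((\<Prod>i<k. f i + mconst \<epsilon>) - mconst (\<epsilon> ^ (k + 1)) * (\<Sum>j<n. mvar j ^ D))) z = 0)}"
proof -
  define P where "P = (\<Prod>i<k. f i + mconst \<epsilon>)"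
  define G where "G = P - mconst (\<epsilon> ^ (k + 1)) * (\<Sum>j<n. mvar j ^ D)"
  have "deg_le (f i + mconst \<epsilon>) (d - 1)" if "i < k" for i
    using degs that by (intro deg_le_add) (fastforce simp: deg_less_def deg_le_def mconst_def)+
  then have "deg_le P (k * (d - 1))"
    unfolding P_def using deg_le_prod[of "{..<k}"] by fastforce
  moreover have "k * (d - 1) < D"
    using D by (metis diff_le_self le_less_trans mult_le_mono2)
  ultimately have deg_P: "deg_less P D"
    unfolding deg_le_def deg_less_def by fastforce
  have "vars_in n (f i + mconst \<epsilon>)" if "i < k" for i
    using vars that by (intro vars_in_add) (auto simp: vars_in_def mconst_def)
  then have vars_P: "vars_in n P"
    unfolding P_def by (intro vars_in_prod) auto
  have D0: "0 < D" using D by linarith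
  note G_props = pure_power_perturbation[OF deg_P vars_P D0, where c = "\<epsilon> ^ (k + 1)", folded G_def]
  have lead: "Poly_Mapping.lookup G (Poly_Mapping.single j D) \<noteq> 0" if "j < n" for j
    using G_props(2)[OF that] \<epsilon> by simp
  have lower: "mdeg \<nu> < D" if "\<nu> \<in> Poly_Mapping.keys G" "Poly_Mapping.lookup \<nu> j \<noteq> 0"
    "\<nu> \<noteq> Poly_Mapping.single j D" for j \<nu>
    using G_props(3)[OF that(1)] that(2,3) by (auto simp: lookup_single when_def split: if_splits)
  show ?thesis
    unfolding P_def[symmetric] G_def[symmetric]
  proof (rule finite_common_zeros_if_pure_power_leading)
    show "vars_in n (mpderiv j G)" for j
      using G_props(1) by (rule vars_in_mpderiv)
    show "Poly_Mapping.lookup (mpderiv j G) (Poly_Mapping.single j (D - 1)) \<noteq> 0" if "j < n" for j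
      using mpderiv_pure_power_leading(1)[OF lead[OF that] D0 lower[where j = j]] by blast
    show "mdeg \<mu> < D - 1" if "j < n" "\<mu> \<in> Poly_Mapping.keys (mpderiv j G)"
      "\<mu> \<noteq> Poly_Mapping.single j (D - 1)" for j \<mu>
      using mpderiv_pure_power_leading(2)[OF lead[OF that(1)] D0 lower[where j = j] that(2,3)] .
  qed
qed

theorem lemma5p3:
  fixes n k d :: nat and f :: "nat \<Rightarrow> real mpoly"
  assumes polys: "\<forall>i<k. vars_in n (f i)"
    and degs: "\<forall>i<k. deg_less (f i) d"
    and origin: "\<not> (\<forall>i<k. 0 \<le> meval (f i) (\<lambda>_. 0::real))"
    and bdd: "\<exists>B. \<forall>x::nat \<Rightarrow> real. (\<forall>j\<ge>n. x j = 0) \<and> (\<forall>i<k. 0 \<le> meval (f i) x)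
                  \<longrightarrow> (\<forall>j<n. \<bar>x j\<bar> \<le> B)"
  defines "g \<equiv> (\<lambda>\<epsilon>::real. (\<Prod>i<k. f i + mconst \<epsilon>)
                 - mconst (\<epsilon> ^ (k + 1)) * (\<Sum>j<n. mvar j ^ min_even_ge (k * d + 1)))"
  shows "\<exists>\<epsilon>0>0. \<forall>\<epsilon>. 0 < \<epsilon> \<and> \<epsilon> < \<epsilon>0 \<longrightarrow>
           ((\<exists>x::nat \<Rightarrow> real. (\<forall>j\<ge>n. x j = 0) \<and> (\<forall>i<k. 0 \<le> meval (f i) x))
            \<longrightarrow> finite {z :: nat \<Rightarrow> complex. (\<forall>j\<ge>n. z j = 0) \<and>
                        (\<forall>j<n. meval (mpderiv j (g \<epsilon>)) z = 0)})"
proof -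
  define D where "D = min_even_ge (k * d + 1)"
  have "k * d < D"
    unfolding D_def min_even_ge_def by (rule LeastI2[of _ "2 * (k * d + 1)"]) auto
  then have "finite {z :: nat \<Rightarrow> complex. (\<forall>j\<ge>n. z j = 0) \<and> (\<forall>j<n. meval (mpderiv j (g \<epsilon>)) z = 0)}"
    if "\<epsilon> \<noteq> 0" for \<epsilon>
    unfolding g_def D_def[symmetric] using finite_gradient_zeros_perturbed_product[OF polys degs that] by blast
  then show ?thesis
    by (intro exI[of _ 1]) auto
qed

end
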